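(* Let $N>0$. For any constant $C>0$ there exists a constant $C_0$ such that $$\prod_{j=1}^\infty\big(1+Ce^{C|\lambda|^N-\sqrt{j}/C}\big)\le C_0e^{C_0|\lambda|^{3N}}$$ holds for all $\lambda\in\mathbb{R}$. *)

theory Defs
  imports "HOL-Analysis.Analysis"
begin

end

theory Submission
  imports Defs "HOL-Real_Asymp.Real_Asymp"
begin

text \<open>Write \<open>a = C |\<lambda>|^N\<close>, so the \<open>j\<close>-th factor is \<open>1 + C exp (a - sqrt j / C)\<close>.
  For the \<open>O(a^2 C^2)\<close> indices with \<open>sqrt j < 2aC\<close> it is at most \<open>(1 + C) exp a\<close>; for
  the others \<open>a - sqrt j / C \<le> - sqrt j / (2C)\<close>, so by \<open>1 + x \<le> exp x\<close> their product is at
  most \<open>exp (\<Sum>j. C exp (- sqrt j / (2C)))\<close>, a constant. Hence the logarithm of the product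
  is \<open>O(a^2 (1 + a)) = O(1 + a^3)\<close>.\<close>

lemma summable_exp_neg_sqrt:
  fixes c :: real
  assumes "c > 0"
  shows "summable (\<lambda>j::nat. exp (- sqrt (real (Suc j)) / c))"
proof (rule summable_comparison_test_bigo)
  show "summable (\<lambda>n. norm (inverse (real n ^ 2)))"
    using inverse_power_summable[of 2, where ?'a=real] by simp
  show "(\<lambda>j::nat. exp (- sqrt (real (Suc j)) / c)) \<in> O(\<lambda>n. inverse (real n ^ 2))"
    using assms by real_asymp
qed

lemma convergent_prod_one_plus_exp_sqrt:
  fixes a C :: real
  assumes "C > 0"
  shows "convergent_prod (\<lambda>j::nat. 1 + C * exp (a - sqrt (real (Suc j)) / C))"
proof -
  have "summable (\<lambda>j::nat. C * exp a * exp (- sqrt (real (Suc j)) / C))"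
    using summable_exp_neg_sqrt[OF assms] by (rule summable_mult)
  then have "summable (\<lambda>j::nat. C * exp (a - sqrt (real (Suc j)) / C))"
    by (simp add: exp_diff exp_minus divide_inverse mult.assoc)
  then show ?thesis
    using assms by (subst convergent_prod_iff_summable_real) simp_all
qed

lemma one_plus_exp_le_exp_tail:
  fixes a s C :: real
  assumes "C > 0" and "2 * a * C \<le> s"
  shows "1 + C * exp (a - s / C) \<le> exp (C * exp (- s / (2 * C)))"
proof -
  have "a - s / C \<le> - s / (2 * C)"
    using assms by (simp add: field_simps)
  then have "1 + C * exp (a - s / C) \<le> 1 + C * exp (- s / (2 * C))"
    using assms by simp
  also have "\<dots> \<le> exp (C * exp (- s / (2 * C)))"
    by (rule exp_ge_add_one_self)
  finally show ?thesis .
qed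

lemma one_plus_exp_le_exp_head:
  fixes a s C :: real
  assumes "C > 0" and "a \<ge> 0" and "s \<ge> 0"
  shows "1 + C * exp (a - s / C) \<le> exp (ln (1 + C) + a)"
proof -
  have "1 + C * exp (a - s / C) \<le> 1 + C * exp a"
    using assms by simp
  also have "\<dots> \<le> (1 + C) * exp a"
    using assms by (simp add: algebra_simps)
  also have "\<dots> = exp (ln (1 + C) + a)"
    using assms by (simp add: exp_add)
  finally show ?thesis .
qed

lemma power_le_one_plus_cube:
  fixes a :: real
  assumes "a \<ge> 0" and "k \<le> 3"
  shows "a ^ k \<le> 1 + a ^ 3"
proof (cases "a \<le> 1")
  case True
  then have "a ^ k \<le> 1" using assms by (simp add: power_le_one)
  moreover have "a ^ 3 \<ge> 0" using assms by simp
  ultimately show ?thesis by linarith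
next
  case False
  then have "a ^ k \<le> a ^ 3" using assms by (simp add: power_increasing)
  then show ?thesis by simp
qed

lemma linear_times_quadratic_le_cubic:
  fixes a m L S C :: real
  assumes "a \<ge> 0" and "L \<ge> 0" and "S \<ge> 0" and "m \<le> 4 * a\<^sup>2 * C\<^sup>2 + 1"
  shows "m * (L + a) + S \<le> (4 * C\<^sup>2 * L + 4 * C\<^sup>2 + L + S + 1) * (1 + a ^ 3)"
proof -
  have "a ^ 2 \<le> 1 + a ^ 3" and a_le: "a \<le> 1 + a ^ 3"
    using power_le_one_plus_cube[OF assms(1), of 2] power_le_one_plus_cube[OF assms(1), of 1]
    by simp_all
  then have "4 * C\<^sup>2 * L * a ^ 2 \<le> 4 * C\<^sup>2 * L * (1 + a ^ 3)"
    using assms(2) by (intro mult_left_mono) auto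
  moreover have "0 \<le> L * a ^ 3" and "0 \<le> S * a ^ 3"
    using assms by simp_all
  moreover have "m * (L + a) \<le> (4 * a\<^sup>2 * C\<^sup>2 + 1) * (L + a)"
    using assms by (intro mult_right_mono) auto
  ultimately show ?thesis
    using a_le zero_le_power2[of C] by (simp only: algebra_simps power2_eq_square power3_eq_cube)
qed

lemma prodinf_one_plus_exp_sqrt_le_split:
  fixes a C :: real
  assumes "C > 0" and "a \<ge> 0"
  shows "(\<Prod>j. 1 + C * exp (a - sqrt (real (Suc j)) / C))
    \<le> exp (real (nat \<lceil>4 * a\<^sup>2 * C\<^sup>2\<rceil>) * (ln (1 + C) + a)
             + (\<Sum>j. C * exp (- sqrt (real (Suc j)) / (2 * C))))"
proof -
  \<comment> \<open>Indices \<open>j \<ge> M\<close> have \<open>2aC \<le> sqrt (j + 1)\<close>; \<open>head\<close> bounds the logarithm of the factors below \<open>M\<close>.\<close>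
  define M where "M = nat \<lceil>4 * a\<^sup>2 * C\<^sup>2\<rceil>"
  define head where "head = (\<lambda>j. if j < M then ln (1 + C) + a else 0)"
  define tail where "tail = (\<lambda>j::nat. C * exp (- sqrt (real (Suc j)) / (2 * C)))"
  define f where "f = (\<lambda>j::nat. 1 + C * exp (a - sqrt (real (Suc j)) / C))"
  have head_summable: "summable head"
    unfolding head_def by (rule summable_finite[of "{..<M}"]) auto
  have tail_summable: "summable tail"
    unfolding tail_def using summable_exp_neg_sqrt[of "2 * C"] assms by (intro summable_mult) auto
  have f_le: "f j \<le> exp (head j + tail j)" for j
  proof (cases "j < M")
    case True
    have "f j \<le> exp (ln (1 + C) + a)"
      unfolding f_def using assms by (intro one_plus_exp_le_exp_head) auto
    also have "\<dots> \<le> exp (head j + tail j)"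
      using True assms by (simp add: head_def tail_def)
    finally show ?thesis .
  next
    case False
    then have "(2 * a * C)\<^sup>2 \<le> real (Suc j)"
      unfolding M_def by (simp add: power_mult_distrib) linarith
    then have "2 * a * C \<le> sqrt (real (Suc j))"
      by (rule real_le_rsqrt)
    then show ?thesis
      using one_plus_exp_le_exp_tail[OF assms(1)] False by (simp add: f_def head_def tail_def)
  qed
  have "prodinf f \<le> prodinf (\<lambda>j. exp (head j + tail j))"
  proof (rule prodinf_le)
    show "f has_prod prodinf f"
      unfolding f_def using assms by (intro convergent_prod_has_prod convergent_prod_one_plus_exp_sqrt)
    show "(\<lambda>j. exp (head j + tail j)) has_prod prodinf (\<lambda>j. exp (head j + tail j))"
      using head_summable tail_summable by (intro convergent_prod_has_prod convergent_prod_exp summable_add)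
    show "0 \<le> f j \<and> f j \<le> exp (head j + tail j)" for j
      using f_le[of j] assms by (simp add: f_def)
  qed
  also have "\<dots> = exp (suminf head + suminf tail)"
    using head_summable tail_summable by (simp add: prodinf_exp summable_add suminf_add)
  also have "suminf head = real M * (ln (1 + C) + a)"
    by (subst suminf_finite[of "{..<M}"]) (auto simp: head_def)
  finally show ?thesis
    unfolding f_def M_def tail_def .
qed

lemma prodinf_one_plus_exp_sqrt_le:
  fixes C :: real
  assumes "C > 0"
  obtains K where "K \<ge> 0"
    and "\<And>a. a \<ge> 0 \<Longrightarrow> (\<Prod>j. 1 + C * exp (a - sqrt (real (Suc j)) / C)) \<le> exp (K * (1 + a ^ 3))"
proof
  define L where "L = ln (1 + C)"
  define S where "S = (\<Sum>j. C * exp (- sqrt (real (Suc j)) / (2 * C)))"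
  define K where "K = 4 * C\<^sup>2 * L + 4 * C\<^sup>2 + L + S + 1"
  have L_nonneg: "L \<ge> 0"
    unfolding L_def using assms by simp
  have S_nonneg: "S \<ge> 0"
    unfolding S_def using summable_exp_neg_sqrt[of "2 * C"] assms
    by (intro suminf_nonneg summable_mult) auto
  show "K \<ge> 0"
    unfolding K_def using L_nonneg S_nonneg by simp
  fix a :: real
  assume a_nonneg: "a \<ge> 0"
  have "real (nat \<lceil>4 * a\<^sup>2 * C\<^sup>2\<rceil>) * (L + a) + S \<le> K * (1 + a ^ 3)"
    unfolding K_def using a_nonneg L_nonneg S_nonneg by (rule linear_times_quadratic_le_cubic) simp
  then show "(\<Prod>j. 1 + C * exp (a - sqrt (real (Suc j)) / C)) \<le> exp (K * (1 + a ^ 3))"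
    using prodinf_one_plus_exp_sqrt_le_split[OF assms a_nonneg] unfolding L_def S_def
    by (meson exp_le_cancel_iff order_trans)
qed

theorem lemma3p1:
  fixes N C :: real
  assumes "N > 0" and "C > 0"
  shows "\<exists>C0::real. \<forall>l::real.
           convergent_prod (\<lambda>j::nat. 1 + C * exp (C * \<bar>l\<bar> powr N - sqrt (real (Suc j)) / C))
         \<and> (\<Prod>j. 1 + C * exp (C * \<bar>l\<bar> powr N - sqrt (real (Suc j)) / C))
             \<le> C0 * exp (C0 * \<bar>l\<bar> powr (3 * N))"
proof -
  obtain K where K_nonneg: "K \<ge> 0" and K_bound:
    "\<And>a. a \<ge> 0 \<Longrightarrow> (\<Prod>j. 1 + C * exp (a - sqrt (real (Suc j)) / C)) \<le> exp (K * (1 + a ^ 3))"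
    using prodinf_one_plus_exp_sqrt_le[OF assms(2)] by blast
  define C0 where "C0 = exp K + K * C ^ 3"
  show ?thesis
  proof (intro exI[of _ C0] allI conjI)
    fix l :: real
    show "convergent_prod (\<lambda>j. 1 + C * exp (C * \<bar>l\<bar> powr N - sqrt (real (Suc j)) / C))"
      using assms(2) by (rule convergent_prod_one_plus_exp_sqrt)
    have cube: "(\<bar>l\<bar> powr N) ^ 3 = \<bar>l\<bar> powr (3 * N)"
      by (cases "l = 0") (simp_all add: powr_power)
    have "(\<Prod>j. 1 + C * exp (C * \<bar>l\<bar> powr N - sqrt (real (Suc j)) / C))
        \<le> exp (K * (1 + (C * \<bar>l\<bar> powr N) ^ 3))"
      using assms(2) by (intro K_bound) simp
    also have "\<dots> = exp K * exp (K * C ^ 3 * \<bar>l\<bar> powr (3 * N))"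
      by (simp add: power_mult_distrib cube exp_add[symmetric] algebra_simps)
    also have "\<dots> \<le> C0 * exp (C0 * \<bar>l\<bar> powr (3 * N))"
      unfolding C0_def using K_nonneg assms(2) by (intro mult_mono) (auto intro!: mult_right_mono)
    finally show "(\<Prod>j. 1 + C * exp (C * \<bar>l\<bar> powr N - sqrt (real (Suc j)) / C))
        \<le> C0 * exp (C0 * \<bar>l\<bar> powr (3 * N))" .
  qed
qed

end
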